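(* Let $H$ be a linear forest and let $k\ge 1$, $n\ge 1$ be integers. Then for every complete $k$-partite graph $G$ on $n$ vertices (with parts $A_1,\dots,A_k$ partitioning the vertex set, some possibly empty), $$\mathcal{N}(H,G)\le \mathcal{N}(H,T(n,k)).$$
   Context: $\mathcal{N}(H,G)$ denotes the number of (not necessarily induced) subgraphs of $G$ isomorphic to $H$. A linear forest is a graph each of whose connected components is a path. The Turán graph $T(n,k)$ is the complete $k$-partite graph on $n$ vertices with each part of size $\lfloor n/k\rfloor$ or $\lceil n/k\rceil$. A complete $k$-partite graph with parts $A_1,\dots,A_k$ has an edge between two vertices exactly when they lie in different parts. *)

theory Defs
  imports Main
begin

definition wf_graph :: "'a set \<Rightarrow> 'a set set \<Rightarrow> bool" where
  "wf_graph V E \<longleftrightarrow> finite V \<and> (\<forall>e\<in>E. \<exists>u v. e = {u, v} \<and> u \<noteq> v \<and> u \<in> V \<and> v \<in> V)"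

definition graph_iso :: "'a set \<Rightarrow> 'a set set \<Rightarrow> 'b set \<Rightarrow> 'b set set \<Rightarrow> bool" where
  "graph_iso V1 E1 V2 E2 \<longleftrightarrow> (\<exists>f. bij_betw f V1 V2 \<and> (\<lambda>e. f ` e) ` E1 = E2)"

text \<open>N(H,G): number of (not necessarily induced) subgraphs of G isomorphic to H.\<close>

definition num_copies :: "'b set \<Rightarrow> 'b set set \<Rightarrow> 'a set \<Rightarrow> 'a set set \<Rightarrow> nat" where
  "num_copies VH EH VG EG =
     card {(V', E'). V' \<subseteq> VG \<and> E' \<subseteq> EG \<and> (\<forall>e\<in>E'. e \<subseteq> V') \<and> graph_iso V' E' VH EH}"

definition path_edges :: "nat \<Rightarrow> nat set set" where
  "path_edges m = {{i, Suc i} | i. Suc i < m}"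

definition is_path :: "'a set \<Rightarrow> 'a set set \<Rightarrow> bool" where
  "is_path V E \<longleftrightarrow> (\<exists>m\<ge>1. graph_iso V E {0..<m} (path_edges m))"

definition linear_forest :: "'a set \<Rightarrow> 'a set set \<Rightarrow> bool" where
  "linear_forest V E \<longleftrightarrow> wf_graph V E \<and>
     (\<exists>P. (\<Union>P = V) \<and> (\<forall>B\<in>P. \<forall>B'\<in>P. B \<noteq> B' \<longrightarrow> B \<inter> B' = {}) \<and>
          (\<forall>e\<in>E. \<exists>B\<in>P. e \<subseteq> B) \<and>
          (\<forall>B\<in>P. is_path B {e\<in>E. e \<subseteq> B}))"

definition cmp_edges :: "nat \<Rightarrow> (nat \<Rightarrow> 'a set) \<Rightarrow> 'a set set" where
  "cmp_edges k A = {{u, v} | u v i j. i < k \<and> j < k \<and> i \<noteq> j \<and> u \<in> A i \<and> v \<in> A j}"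

definition is_partition_into :: "nat \<Rightarrow> (nat \<Rightarrow> 'a set) \<Rightarrow> 'a set \<Rightarrow> bool" where
  "is_partition_into k A V \<longleftrightarrow> (\<Union>i<k. A i) = V \<and> (\<forall>i<k. \<forall>j<k. i \<noteq> j \<longrightarrow> A i \<inter> A j = {})"

text \<open>Turan graph T(n,k) on vertex set {0..<n}: vertex v lies in part v mod k, so the parts have
  sizes floor(n/k) or ceiling(n/k).\<close>

definition turan_parts :: "nat \<Rightarrow> nat \<Rightarrow> nat \<Rightarrow> nat set" where
  "turan_parts n k i = {v. v < n \<and> v mod k = i}"

definition turan_edges :: "nat \<Rightarrow> nat \<Rightarrow> nat set set" where
  "turan_edges n k = cmp_edges k (turan_parts n k)"

end

theory Submission
  imports Defs "HOL-Library.FuncSet"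
begin

text \<open>
  A linear forest H is isomorphic to the path forest on {0..<N} whose edges are the links
  {h, h+1} for h in some set L, and N(H,G) times the number of automorphisms of H equals the
  number of embeddings of this path forest into G.  For a complete multipartite G, fix two parts
  X and Y and group the embeddings by the positions sent into X \<union> Y and by the images of the
  remaining positions.  Each group is counted by the embeddings of a smaller path forest into the
  complete bipartite graph between X and Y, and this number is C x^(p) y^(p) (x+y-2p)^(m) in
  falling factorials of x = |X| and y = |Y|, with C, p, m independent of X and Y.  Moving one
  vertex from X to Y when y < x keeps x + y and does not decrease x^(p) y^(p), hence does not
  decrease the number of embeddings.  Repeating such moves balances the parts, and once no part
  is larger than the corresponding part of T(n,k), G embeds part-preservingly into T(n,k).
\<close>

section \<open>Falling factorials\<close>

fun falling_fact :: "nat \<Rightarrow> nat \<Rightarrow> nat" where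
  "falling_fact x 0 = 1"
| "falling_fact x (Suc p) = falling_fact x p * (x - p)"

lemma falling_fact_Suc_left: "falling_fact x (Suc p) = x * falling_fact (x - 1) p"
  by (induction p) (auto simp: algebra_simps)

lemma falling_fact_eq_0: "x < p \<Longrightarrow> falling_fact x p = 0"
proof (induction p)
  case (Suc p)
  then show ?case by (cases "x = p") auto
qed auto

lemma falling_fact_split:
  "falling_fact x (Suc p) * falling_fact y p * falling_fact (x + y - 2*p - 1) m
     + falling_fact x p * falling_fact y (Suc p) * falling_fact (x + y - 2*p - 1) m
   = falling_fact x p * falling_fact y p * falling_fact (x + y - 2*p) (Suc m)"
proof (cases "p \<le> x \<and> p \<le> y")
  case True
  define q r where "q = x - p" and "r = y - p"
  have "x + y - 2*p = q + r" "x + y - 2*p - 1 = q + r - 1"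
    using True unfolding q_def r_def by auto
  moreover have "falling_fact (q + r) (Suc m) = (q + r) * falling_fact (q + r - 1) m"
    by (rule falling_fact_Suc_left)
  ultimately show ?thesis by (simp add: q_def r_def algebra_simps)
next
  case False
  then show ?thesis by (auto simp: not_le falling_fact_eq_0)
qed

lemma falling_fact_mult_le_balanced:
  "y + 1 \<le> x \<Longrightarrow> falling_fact x p * falling_fact y p \<le> falling_fact (x - 1) p * falling_fact (y + 1) p"
proof (induction p)
  case (Suc p)
  have "(x - p) * (y - p) \<le> (x - 1 - p) * (y + 1 - p)"
  proof (cases "p \<le> y")
    case True
    define a b where "a = x - 1 - y" and "b = y - p"
    have "x - p = Suc a + b" "y - p = b" "x - 1 - p = a + b" "y + 1 - p = Suc b"
      using Suc.prems True unfolding a_def b_def by auto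
    then show ?thesis by (simp add: algebra_simps)
  qed auto
  from mult_le_mono[OF Suc.IH[OF Suc.prems] this] show ?case
    by (simp only: falling_fact.simps mult_ac)
qed auto

section \<open>Alternating injections into two disjoint sets\<close>

text \<open>For disjoint X and Y these are the embeddings of the path forest on U with links
  {h, Suc h}, h \<in> L, into the complete bipartite graph between X and Y.\<close>

definition alternating_injs :: "nat set \<Rightarrow> nat set \<Rightarrow> 'a set \<Rightarrow> 'a set \<Rightarrow> (nat \<Rightarrow> 'a) set" where
  "alternating_injs L U X Y = {f \<in> U \<rightarrow>\<^sub>E X \<union> Y. inj_on f U \<and>
      (\<forall>h\<in>L. h \<in> U \<longrightarrow> Suc h \<in> U \<longrightarrow> (f h \<in> X \<longleftrightarrow> f (Suc h) \<in> Y))}"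

definition alternating_injs_start :: "nat set \<Rightarrow> nat set \<Rightarrow> 'a set \<Rightarrow> 'a set \<Rightarrow> 'a set \<Rightarrow> (nat \<Rightarrow> 'a) set" where
  "alternating_injs_start L U X Y S = {f \<in> alternating_injs L U X Y. f (Min U) \<in> S}"

lemma alternating_injs_commute: "X \<inter> Y = {} \<Longrightarrow> alternating_injs L U X Y = alternating_injs L U Y X"
  unfolding alternating_injs_def by (auto simp: PiE_iff)

lemma alternating_injs_start_commute:
  "X \<inter> Y = {} \<Longrightarrow> alternating_injs_start L U X Y S = alternating_injs_start L U Y X S"
  unfolding alternating_injs_start_def using alternating_injs_commute[of X Y L U] by simp

lemma finite_alternating_injs: "finite U \<Longrightarrow> finite X \<Longrightarrow> finite Y \<Longrightarrow> finite (alternating_injs L U X Y)"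
  by (rule finite_subset[of _ "U \<rightarrow>\<^sub>E X \<union> Y"]) (auto simp: alternating_injs_def intro: finite_PiE)

lemma alternating_injs_restrict:
  assumes f: "f \<in> alternating_injs L U X Y" and u: "u \<in> U"
  shows "restrict f (U - {u}) \<in> alternating_injs L (U - {u}) (X - {f u}) Y"
proof -
  have "f h \<noteq> f u" if "h \<in> U - {u}" for h
    using f u that unfolding alternating_injs_def by (auto dest: inj_onD)
  then show ?thesis
    using f unfolding alternating_injs_def by (auto simp: PiE_iff inj_on_def)
qed

lemma alternating_injs_extend:
  assumes f: "f \<in> alternating_injs L (U - {u}) (X - {z}) Y"
    and u: "u \<in> U" "\<And>h. h \<in> U \<Longrightarrow> u \<le> h" and z: "z \<in> X" "z \<notin> Y"
    and link: "u \<in> L \<Longrightarrow> Suc u \<in> U \<Longrightarrow> f (Suc u) \<in> Y"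
  shows "f(u := z) \<in> alternating_injs L U X Y"
proof -
  have fE: "f \<in> U - {u} \<rightarrow>\<^sub>E X - {z} \<union> Y" and fi: "inj_on f (U - {u})"
    and fl: "\<And>h. h \<in> L \<Longrightarrow> h \<in> U - {u} \<Longrightarrow> Suc h \<in> U - {u} \<Longrightarrow> f h \<in> X - {z} \<longleftrightarrow> f (Suc h) \<in> Y"
    using f unfolding alternating_injs_def by auto
  have "f(u := z) \<in> U \<rightarrow>\<^sub>E X \<union> Y"
    using fE u z by (auto simp: PiE_iff extensional_def)
  moreover have "inj_on (f(u := z)) U"
    using fE fi z by (auto simp: inj_on_def PiE_iff)
  moreover have "(f(u := z)) h \<in> X \<longleftrightarrow> (f(u := z)) (Suc h) \<in> Y"
    if "h \<in> L" "h \<in> U" "Suc h \<in> U" for h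
  proof (cases "h = u")
    case False
    with that u(2)[of h] have "h \<in> U - {u}" "Suc h \<in> U - {u}" by auto
    with fE fl[OF \<open>h \<in> L\<close>] z show ?thesis by (auto simp: PiE_iff)
  qed (use that link z in auto)
  ultimately show ?thesis unfolding alternating_injs_def by blast
qed

text \<open>Vertices are removed in increasing order, so the only link at Min U is the one to
  Suc (Min U).\<close>

lemma card_alternating_injs_fiber:
  assumes U: "finite U" "U \<noteq> {}" and z: "z \<in> X" and XY: "X \<inter> Y = {}"
  defines "u \<equiv> Min U"
  shows "card {f \<in> alternating_injs L U X Y. f u = z} =
    card (if u \<in> L \<and> Suc u \<in> U then alternating_injs_start L (U - {u}) (X - {z}) Y Y
          else alternating_injs L (U - {u}) (X - {z}) Y)"
proof (rule bij_betw_same_card, rule bij_betw_byWitness[where f' = "\<lambda>f. f(u := z)"])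
  let ?T = "if u \<in> L \<and> Suc u \<in> U then alternating_injs_start L (U - {u}) (X - {z}) Y Y
            else alternating_injs L (U - {u}) (X - {z}) Y"
  have u: "u \<in> U" "\<And>h. h \<in> U \<Longrightarrow> u \<le> h" using U unfolding u_def by auto
  have Min_rest: "Min (U - {u}) = Suc u" if "Suc u \<in> U"
    using U u that by (intro Min_eqI) (auto simp: Suc_le_eq order.strict_iff_order)
  show "\<forall>f\<in>{f \<in> alternating_injs L U X Y. f u = z}. (restrict f (U - {u}))(u := z) = f"
    using u(1) by (auto simp: alternating_injs_def PiE_iff extensional_def fun_eq_iff)
  show "\<forall>f\<in>?T. restrict (f(u := z)) (U - {u}) = f"
    by (auto simp: alternating_injs_start_def alternating_injs_def PiE_iff extensional_def fun_eq_iff)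
  show "(\<lambda>f. restrict f (U - {u})) ` {f \<in> alternating_injs L U X Y. f u = z} \<subseteq> ?T"
  proof (rule image_subsetI)
    fix f assume "f \<in> {f \<in> alternating_injs L U X Y. f u = z}"
    then have f: "f \<in> alternating_injs L U X Y" and fu: "f u = z" by auto
    have "f (Suc u) \<in> Y" if "u \<in> L" "Suc u \<in> U"
      using f that u z fu unfolding alternating_injs_def by auto
    with alternating_injs_restrict[OF f u(1)] fu Min_rest
    show "restrict f (U - {u}) \<in> ?T" by (auto simp: alternating_injs_start_def)
  qed
  show "(\<lambda>f. f(u := z)) ` ?T \<subseteq> {f \<in> alternating_injs L U X Y. f u = z}"
  proof (rule image_subsetI)
    fix f assume "f \<in> ?T"
    then have "f \<in> alternating_injs L (U - {u}) (X - {z}) Y"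
      and "u \<in> L \<Longrightarrow> Suc u \<in> U \<Longrightarrow> f (Suc u) \<in> Y"
      using Min_rest by (auto simp: alternating_injs_start_def split: if_splits)
    from alternating_injs_extend[OF this(1) u z _ this(2)] XY z
    show "f(u := z) \<in> {f \<in> alternating_injs L U X Y. f u = z}" by auto
  qed
qed

lemma card_alternating_injs_start:
  assumes U: "finite U" "U \<noteq> {}" and XY: "finite X" "finite Y" "X \<inter> Y = {}"
    and fiber: "\<And>z. z \<in> X \<Longrightarrow> card {f \<in> alternating_injs L U X Y. f (Min U) = z} = c"
  shows "card (alternating_injs_start L U X Y X) = card X * c"
proof -
  have "alternating_injs_start L U X Y X = (\<Union>z\<in>X. {f \<in> alternating_injs L U X Y. f (Min U) = z})"
    unfolding alternating_injs_start_def by auto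
  also have "card \<dots> = (\<Sum>z\<in>X. card {f \<in> alternating_injs L U X Y. f (Min U) = z})"
    using U XY finite_alternating_injs[of U X Y L] by (intro card_UN_disjoint) auto
  finally show ?thesis using fiber by simp
qed

text \<open>A path with 2a vertices uses a vertices on each side, one with 2a+1 vertices an extra
  vertex on either side; summing over these choices (falling_fact_split is the Vandermonde step)
  gives the shape below, where d = 1 records that the path through Min U has an odd number of
  vertices with its surplus vertex in X.\<close>

definition alternating_count :: "nat \<Rightarrow> nat \<Rightarrow> nat \<Rightarrow> nat \<Rightarrow> nat \<Rightarrow> nat" where
  "alternating_count p m d x y =
     falling_fact x (p + d) * falling_fact y p * falling_fact (x + y - 2*p - d) m"

definition has_alternating_count :: "('a set \<Rightarrow> 'a set \<Rightarrow> nat) \<Rightarrow> nat \<Rightarrow> nat \<Rightarrow> nat \<Rightarrow> nat \<Rightarrow> bool" where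
  "has_alternating_count F C p m d \<longleftrightarrow> (\<forall>X Y. finite X \<longrightarrow> finite Y \<longrightarrow> X \<inter> Y = {} \<longrightarrow>
     F X Y = C * alternating_count p m d (card X) (card Y))"

lemma alternating_count_0_commute: "alternating_count p m 0 x y = alternating_count p m 0 y x"
  by (simp add: alternating_count_def algebra_simps)

lemma alternating_count_0_Suc: "x * alternating_count p m 0 (x - 1) y = alternating_count p m 1 x y"
proof (cases "x = 0")
  case False
  then have "x - 1 + y - 2*p = x + y - 2*p - 1" by auto
  then show ?thesis using falling_fact_Suc_left[of x p] by (simp add: alternating_count_def)
qed (simp add: alternating_count_def falling_fact_eq_0)

lemma alternating_count_1_Suc: "x * alternating_count p m 1 y (x - 1) = alternating_count (p + 1) m 0 x y"
proof (cases "x = 0")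
  case False
  then have "y + (x - 1) - 2*p - 1 = x + y - 2*(p+1)" by auto
  then show ?thesis using falling_fact_Suc_left[of x p] by (simp add: alternating_count_def algebra_simps)
qed (simp add: alternating_count_def falling_fact_eq_0)

lemma alternating_count_1_add_commute:
  "alternating_count p m 1 x y + alternating_count p m 1 y x = alternating_count p (Suc m) 0 x y"
  using falling_fact_split[of x p y m]
  by (simp add: alternating_count_def add.commute mult.commute mult.left_commute)

lemma alternating_count_0_le_balanced:
  assumes "y + 1 \<le> x"
  shows "alternating_count p m 0 x y \<le> alternating_count p m 0 (x - 1) (y + 1)"
proof -
  have "x - 1 + (y + 1) = x + y" using assms by simp
  then show ?thesis
    unfolding alternating_count_def add_0_right diff_zero
    by (simp only:) (rule mult_le_mono1[OF falling_fact_mult_le_balanced[OF assms]])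
qed

lemma has_alternating_countI:
  assumes "\<And>X Y. finite X \<Longrightarrow> finite Y \<Longrightarrow> X \<inter> Y = {} \<Longrightarrow>
    F X Y = C * alternating_count p m d (card X) (card Y)"
  shows "has_alternating_count F C p m d"
  using assms unfolding has_alternating_count_def by simp

lemma has_alternating_countD:
  "has_alternating_count F C p m d \<Longrightarrow> finite X \<Longrightarrow> finite Y \<Longrightarrow> X \<inter> Y = {} \<Longrightarrow>
    F X Y = C * alternating_count p m d (card X) (card Y)"
  unfolding has_alternating_count_def by simp

lemma has_alternating_count_start_unlinked:
  assumes U: "finite U" "U \<noteq> {}" and unlinked: "\<not> (Min U \<in> L \<and> Suc (Min U) \<in> U)"
    and rest: "has_alternating_count (\<lambda>X Y :: 'a set. card (alternating_injs L (U - {Min U}) X Y)) C p m 0"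
  shows "has_alternating_count (\<lambda>X Y :: 'a set. card (alternating_injs_start L U X Y X)) C p m 1"
proof (rule has_alternating_countI)
  fix X Y :: "'a set" assume XY: "finite X" "finite Y" "X \<inter> Y = {}"
  have "card {f \<in> alternating_injs L U X Y. f (Min U) = z} = C * alternating_count p m 0 (card X - 1) (card Y)"
    if z: "z \<in> X" for z
  proof -
    have "card {f \<in> alternating_injs L U X Y. f (Min U) = z} = card (alternating_injs L (U - {Min U}) (X - {z}) Y)"
      using card_alternating_injs_fiber[OF U z XY(3), of L] by (simp only: unlinked if_False)
    also have "\<dots> = C * alternating_count p m 0 (card (X - {z})) (card Y)"
      using XY by (intro has_alternating_countD[OF rest]) auto
    finally show ?thesis using XY z by simp
  qed
  then have "card (alternating_injs_start L U X Y X) = card X * (C * alternating_count p m 0 (card X - 1) (card Y))"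
    by (rule card_alternating_injs_start[OF U XY])
  also have "\<dots> = C * (card X * alternating_count p m 0 (card X - 1) (card Y))"
    by (rule mult.left_commute)
  finally show "card (alternating_injs_start L U X Y X) = C * alternating_count p m 1 (card X) (card Y)"
    by (simp only: alternating_count_0_Suc)
qed

lemma has_alternating_count_start_linked:
  assumes U: "finite U" and linked: "Min U \<in> L" "Suc (Min U) \<in> U"
    and rest: "has_alternating_count (\<lambda>X Y :: 'a set. card (alternating_injs_start L (U - {Min U}) X Y X)) C p m d"
    and d: "d \<le> 1"
  shows "\<exists>p' d'. d' \<le> 1 \<and> has_alternating_count (\<lambda>X Y :: 'a set. card (alternating_injs_start L U X Y X)) C p' m d'"
proof -
  have U0: "U \<noteq> {}" using linked by auto
  have start: "card (alternating_injs_start L U X Y X) = C * (card X * alternating_count p m d (card Y) (card X - 1))"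
    if XY: "finite X" "finite Y" "X \<inter> Y = {}" for X Y :: "'a set"
  proof -
    have "card {f \<in> alternating_injs L U X Y. f (Min U) = z} = C * alternating_count p m d (card Y) (card X - 1)"
      if z: "z \<in> X" for z
    proof -
      have Xz: "(X - {z}) \<inter> Y = {}" "Y \<inter> (X - {z}) = {}" using XY(3) by blast+
      have "card {f \<in> alternating_injs L U X Y. f (Min U) = z}
          = card (alternating_injs_start L (U - {Min U}) Y (X - {z}) Y)"
        using card_alternating_injs_fiber[OF U U0 z XY(3), of L]
        by (simp only: linked simp_thms if_True alternating_injs_start_commute[OF Xz(1)])
      also have "\<dots> = C * alternating_count p m d (card Y) (card (X - {z}))"
        using XY Xz by (intro has_alternating_countD[OF rest]) auto
      finally show ?thesis using XY z by simp
    qed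
    then have "card (alternating_injs_start L U X Y X) = card X * (C * alternating_count p m d (card Y) (card X - 1))"
      by (rule card_alternating_injs_start[OF U U0 XY])
    then show ?thesis by (simp only: mult.left_commute)
  qed
  show ?thesis
  proof (cases "d = 0")
    case True
    have "has_alternating_count (\<lambda>X Y :: 'a set. card (alternating_injs_start L U X Y X)) C p m 1"
    proof (rule has_alternating_countI)
      fix X Y :: "'a set" assume XY: "finite X" "finite Y" "X \<inter> Y = {}"
      have "card (alternating_injs_start L U X Y X) = C * (card X * alternating_count p m 0 (card Y) (card X - 1))"
        using start[OF XY] by (simp only: True)
      then show "card (alternating_injs_start L U X Y X) = C * alternating_count p m 1 (card X) (card Y)"
        by (simp only: alternating_count_0_commute[of p m "card Y"] alternating_count_0_Suc)
    qed
    then show ?thesis by blast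
  next
    case False
    with d have d1: "d = 1" by simp
    have "has_alternating_count (\<lambda>X Y :: 'a set. card (alternating_injs_start L U X Y X)) C (p + 1) m 0"
    proof (rule has_alternating_countI)
      fix X Y :: "'a set" assume XY: "finite X" "finite Y" "X \<inter> Y = {}"
      show "card (alternating_injs_start L U X Y X) = C * alternating_count (p + 1) m 0 (card X) (card Y)"
        using start[OF XY] by (simp only: d1 alternating_count_1_Suc)
    qed
    then show ?thesis by blast
  qed
qed

lemma has_alternating_count_of_start:
  assumes U: "finite U" "U \<noteq> {}" and d: "d \<le> 1"
    and start: "has_alternating_count (\<lambda>X Y :: 'a set. card (alternating_injs_start L U X Y X)) C p m d"
  shows "\<exists>C' m'. has_alternating_count (\<lambda>X Y :: 'a set. card (alternating_injs L U X Y)) C' p m' 0"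
proof -
  have split: "card (alternating_injs L U X Y)
      = C * (alternating_count p m d (card X) (card Y) + alternating_count p m d (card Y) (card X))"
    if XY: "finite X" "finite Y" "X \<inter> Y = {}" for X Y :: "'a set"
  proof -
    have YX: "Y \<inter> X = {}" using XY(3) by blast
    have "f (Min U) \<in> X \<union> Y" if "f \<in> alternating_injs L U X Y" for f
      using that Min_in[OF U] by (auto simp: alternating_injs_def)
    then have "alternating_injs L U X Y = alternating_injs_start L U X Y X \<union> alternating_injs_start L U X Y Y"
      unfolding alternating_injs_start_def by blast
    also have "\<dots> = alternating_injs_start L U X Y X \<union> alternating_injs_start L U Y X Y"
      by (simp only: alternating_injs_start_commute[OF XY(3)])
    moreover have "finite (alternating_injs_start L U X Y X)" "finite (alternating_injs_start L U Y X Y)"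
      using XY U finite_alternating_injs[of U X Y L] finite_alternating_injs[of U Y X L]
      by (auto simp: alternating_injs_start_def)
    moreover have "alternating_injs_start L U X Y X \<inter> alternating_injs_start L U Y X Y = {}"
      using XY(3) by (auto simp: alternating_injs_start_def)
    ultimately have "card (alternating_injs L U X Y)
        = card (alternating_injs_start L U X Y X) + card (alternating_injs_start L U Y X Y)"
      by (simp add: card_Un_disjoint)
    also have "\<dots> = C * alternating_count p m d (card X) (card Y) + C * alternating_count p m d (card Y) (card X)"
      using XY YX by (simp only: has_alternating_countD[OF start])
    finally show ?thesis by (simp only: add_mult_distrib2)
  qed
  show ?thesis
  proof (cases "d = 0")
    case True
    have "has_alternating_count (\<lambda>X Y :: 'a set. card (alternating_injs L U X Y)) (2 * C) p m 0"
    proof (rule has_alternating_countI)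
      fix X Y :: "'a set" assume XY: "finite X" "finite Y" "X \<inter> Y = {}"
      show "card (alternating_injs L U X Y) = 2 * C * alternating_count p m 0 (card X) (card Y)"
        using split[OF XY] True alternating_count_0_commute[of p m "card Y" "card X"] by simp
    qed
    then show ?thesis by blast
  next
    case False
    with d have d1: "d = 1" by simp
    have "has_alternating_count (\<lambda>X Y :: 'a set. card (alternating_injs L U X Y)) C p (Suc m) 0"
    proof (rule has_alternating_countI)
      fix X Y :: "'a set" assume XY: "finite X" "finite Y" "X \<inter> Y = {}"
      show "card (alternating_injs L U X Y) = C * alternating_count p (Suc m) 0 (card X) (card Y)"
        using split[OF XY] by (simp only: d1 alternating_count_1_add_commute)
    qed
    then show ?thesis by blast
  qed
qed

lemma alternating_injs_closed_form:
  fixes L :: "nat set"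
  assumes "finite U"
  shows "(\<exists>C p m. has_alternating_count (\<lambda>X Y :: 'a set. card (alternating_injs L U X Y)) C p m 0) \<and>
    (U \<noteq> {} \<longrightarrow> (\<exists>C p m d. d \<le> 1 \<and>
       has_alternating_count (\<lambda>X Y :: 'a set. card (alternating_injs_start L U X Y X)) C p m d))"
  using assms
proof (induction U rule: finite_psubset_induct)
  case (psubset U)
  show ?case
  proof (cases "U = {}")
    case True
    have "alternating_injs L {} X Y = {\<lambda>_. undefined}" for X Y :: "'a set"
      by (auto simp: alternating_injs_def)
    then have "has_alternating_count (\<lambda>X Y :: 'a set. card (alternating_injs L U X Y)) 1 0 0 0"
      using True by (intro has_alternating_countI) (simp add: alternating_count_def)
    with True show ?thesis by blast
  next
    case False
    let ?U' = "U - {Min U}"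
    have "?U' \<subset> U" using Min_in[OF psubset.hyps False] by blast
    note IH = psubset.IH[OF this]
    obtain C p m d where d: "d \<le> 1"
      and start: "has_alternating_count (\<lambda>X Y :: 'a set. card (alternating_injs_start L U X Y X)) C p m d"
    proof (cases "Min U \<in> L \<and> Suc (Min U) \<in> U")
      case True
      then have "?U' \<noteq> {}" by auto
      with IH obtain C p m d where "d \<le> 1"
        "has_alternating_count (\<lambda>X Y :: 'a set. card (alternating_injs_start L ?U' X Y X)) C p m d"
        by blast
      from has_alternating_count_start_linked[OF psubset.hyps _ _ this(2,1)] True that
      show thesis by blast
    next
      case unlinked: False
      from IH obtain C p m where
        "has_alternating_count (\<lambda>X Y :: 'a set. card (alternating_injs L ?U' X Y)) C p m 0"
        by blast
      from has_alternating_count_start_unlinked[OF psubset.hyps False unlinked this] that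
      show thesis by blast
    qed
    from has_alternating_count_of_start[OF psubset.hyps False d start] d start False
    show ?thesis by blast
  qed
qed

lemma card_alternating_injs_le_balanced:
  assumes U: "finite U" and XY: "finite X" "finite Y" "X \<inter> Y = {}"
    and v: "v \<in> X" and le: "card Y + 1 \<le> card X"
  shows "card (alternating_injs L U X Y) \<le> card (alternating_injs L U (X - {v}) (insert v Y))"
proof -
  obtain C p m where count: "has_alternating_count (\<lambda>X Y :: 'a set. card (alternating_injs L U X Y)) C p m 0"
    using alternating_injs_closed_form[OF U] by blast
  have "v \<notin> Y" using XY(3) v by blast
  then have moved: "finite (X - {v})" "finite (insert v Y)" "(X - {v}) \<inter> insert v Y = {}"
    "card (X - {v}) = card X - 1" "card (insert v Y) = card Y + 1"
    using XY v by auto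
  have "card (alternating_injs L U X Y) = C * alternating_count p m 0 (card X) (card Y)"
    using XY by (rule has_alternating_countD[OF count])
  also have "\<dots> \<le> C * alternating_count p m 0 (card X - 1) (card Y + 1)"
    using alternating_count_0_le_balanced[OF le] by (rule mult_le_mono2)
  also have "\<dots> = card (alternating_injs L U (X - {v}) (insert v Y))"
    using has_alternating_countD[OF count moved(1-3)] moved(4,5) by simp
  finally show ?thesis .
qed

section \<open>Embeddings of path forests into complete multipartite graphs\<close>

lemma card_eq_sum_card_fibers:
  assumes "finite S" "finite T" "g ` S \<subseteq> T"
  shows "card S = (\<Sum>y\<in>T. card {x \<in> S. g x = y})"
  using sum.group[OF assms, of "\<lambda>_. 1::nat"] by simp

definition in_distinct_parts :: "nat \<Rightarrow> (nat \<Rightarrow> 'a set) \<Rightarrow> 'a \<Rightarrow> 'a \<Rightarrow> bool" where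
  "in_distinct_parts k A u w \<longleftrightarrow> (\<exists>i<k. \<exists>j<k. i \<noteq> j \<and> u \<in> A i \<and> w \<in> A j)"

text \<open>A linear forest is modelled on the vertex set {0..<N} with the edges {h, Suc h}, h \<in> L
  (see linear_forest_graph_iso_link_edges); these are its embeddings into (VG, EG).\<close>

definition path_forest_embs :: "nat \<Rightarrow> nat set \<Rightarrow> 'a set \<Rightarrow> 'a set set \<Rightarrow> (nat \<Rightarrow> 'a) set" where
  "path_forest_embs N L VG EG =
     {g \<in> {0..<N} \<rightarrow>\<^sub>E VG. inj_on g {0..<N} \<and> (\<forall>h\<in>L. {g h, g (Suc h)} \<in> EG)}"

lemma doubleton_in_cmp_edges_iff: "{u, w} \<in> cmp_edges k A \<longleftrightarrow> in_distinct_parts k A u w"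
proof
  assume "{u, w} \<in> cmp_edges k A"
  then obtain u' w' i j where *: "{u, w} = {u', w'}" "i < k" "j < k" "i \<noteq> j" "u' \<in> A i" "w' \<in> A j"
    unfolding cmp_edges_def by blast
  then have "(u = u' \<and> w = w') \<or> (u = w' \<and> w = u')" by (auto simp: doubleton_eq_iff)
  with * show "in_distinct_parts k A u w" unfolding in_distinct_parts_def by metis
qed (auto simp: in_distinct_parts_def cmp_edges_def)

lemma path_forest_embs_cmp_edges:
  "path_forest_embs N L VG (cmp_edges k A) =
     {g \<in> {0..<N} \<rightarrow>\<^sub>E VG. inj_on g {0..<N} \<and> (\<forall>h\<in>L. in_distinct_parts k A (g h) (g (Suc h)))}"
  unfolding path_forest_embs_def doubleton_in_cmp_edges_iff ..

lemma finite_path_forest_embs: "finite VG \<Longrightarrow> finite (path_forest_embs N L VG EG)"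
  by (rule finite_subset[of _ "{0..<N} \<rightarrow>\<^sub>E VG"]) (auto simp: path_forest_embs_def intro: finite_PiE)

lemma is_partition_into_unique:
  "is_partition_into k A V \<Longrightarrow> u \<in> A i \<Longrightarrow> u \<in> A j \<Longrightarrow> i < k \<Longrightarrow> j < k \<Longrightarrow> i = j"
  unfolding is_partition_into_def by blast

lemma is_partition_into_subset: "is_partition_into k A V \<Longrightarrow> i < k \<Longrightarrow> A i \<subseteq> V"
  unfolding is_partition_into_def by blast

lemma is_partition_into_cover: "is_partition_into k A V \<Longrightarrow> u \<in> V \<Longrightarrow> \<exists>i<k. u \<in> A i"
  unfolding is_partition_into_def by blast

lemma sum_card_is_partition_into:
  assumes part: "is_partition_into k A V" and fin: "finite V"
  shows "(\<Sum>i<k. card (A i)) = card V"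
proof -
  have "card (\<Union>i<k. A i) = (\<Sum>i<k. card (A i))"
    using part fin is_partition_into_subset[OF part]
    by (intro card_UN_disjoint) (auto intro: finite_subset simp: is_partition_into_def)
  then show ?thesis using part unfolding is_partition_into_def by simp
qed

lemma in_distinct_parts_within_two:
  assumes part: "is_partition_into k A V" and ij: "i < k" "j < k" "i \<noteq> j"
    and xy: "x \<in> A i \<union> A j" "y \<in> A i \<union> A j"
  shows "in_distinct_parts k A x y \<longleftrightarrow> (x \<in> A i \<longleftrightarrow> y \<in> A j)"
proof
  assume "in_distinct_parts k A x y"
  then obtain i' j' where "i' < k" "j' < k" "i' \<noteq> j'" "x \<in> A i'" "y \<in> A j'"
    unfolding in_distinct_parts_def by blast
  with xy ij show "x \<in> A i \<longleftrightarrow> y \<in> A j" by (metis UnE is_partition_into_unique[OF part])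
next
  assume "x \<in> A i \<longleftrightarrow> y \<in> A j"
  with xy ij show "in_distinct_parts k A x y" unfolding in_distinct_parts_def by blast
qed

lemma in_distinct_parts_leaving_two:
  assumes part: "is_partition_into k A V" and ij: "i < k" "j < k"
    and x: "x \<in> A i \<union> A j" and y: "y \<in> V" "y \<notin> A i \<union> A j"
  shows "in_distinct_parts k A x y" "in_distinct_parts k A y x"
proof -
  obtain l where "l < k" "y \<in> A l" using is_partition_into_cover[OF part y(1)] by blast
  with x y(2) ij show "in_distinct_parts k A x y" "in_distinct_parts k A y x"
    unfolding in_distinct_parts_def by blast+
qed

text \<open>An embedding is determined by the set U of positions it sends into W = A i \<union> A j, its
  values outside U, and an alternating injection of U into A i and A j.  Only the last part
  depends on how W is split into A i and A j.\<close>

definition trace_outside :: "'a set \<Rightarrow> nat \<Rightarrow> (nat \<Rightarrow> 'a) \<Rightarrow> nat set \<times> (nat \<Rightarrow> 'a)" where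
  "trace_outside W N g =
     (let U = {h \<in> {0..<N}. g h \<in> W} in (U, restrict g ({0..<N} - U)))"

definition admissible_outside ::
    "nat \<Rightarrow> (nat \<Rightarrow> 'a set) \<Rightarrow> 'a set \<Rightarrow> 'a set \<Rightarrow> nat \<Rightarrow> nat set \<Rightarrow> nat set \<Rightarrow> (nat \<Rightarrow> 'a) \<Rightarrow> bool" where
  "admissible_outside k A V W N L U r \<longleftrightarrow> inj_on r ({0..<N} - U) \<and> r ` ({0..<N} - U) \<subseteq> V - W \<and>
     (\<forall>h\<in>L. h \<notin> U \<longrightarrow> Suc h \<notin> U \<longrightarrow> in_distinct_parts k A (r h) (r (Suc h)))"

context
  fixes k :: nat and A :: "nat \<Rightarrow> 'a set" and V :: "'a set" and i j N :: nat and L :: "nat set"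
  assumes part: "is_partition_into k A V" and ij: "i < k" "j < k" "i \<noteq> j"
    and L: "L \<subseteq> {h. Suc h < N}"
begin

lemma trace_outside_fiberD:
  assumes g: "g \<in> path_forest_embs N L V (cmp_edges k A)"
    and trace: "trace_outside (A i \<union> A j) N g = (U, r)"
  shows "admissible_outside k A V (A i \<union> A j) N L U r"
    and "restrict g U \<in> alternating_injs L U (A i) (A j)"
proof -
  have gE: "g \<in> {0..<N} \<rightarrow>\<^sub>E V" and gi: "inj_on g {0..<N}"
    and gs: "\<And>h. h \<in> L \<Longrightarrow> in_distinct_parts k A (g h) (g (Suc h))"
    using g unfolding path_forest_embs_cmp_edges by auto
  have U: "U = {h \<in> {0..<N}. g h \<in> A i \<union> A j}" and r: "r = restrict g ({0..<N} - U)"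
    using trace unfolding trace_outside_def Let_def by auto
  have links: "h < N" "Suc h < N" if "h \<in> L" for h using L that by auto
  show "admissible_outside k A V (A i \<union> A j) N L U r"
    unfolding admissible_outside_def
    using gi gE gs links by (auto simp: U r inj_on_def)
  have "g h \<in> A i \<longleftrightarrow> g (Suc h) \<in> A j" if "h \<in> L" "h \<in> U" "Suc h \<in> U" for h
    using gs[OF that(1)] in_distinct_parts_within_two[OF part ij, of "g h" "g (Suc h)"] that U by auto
  moreover have "restrict g U \<in> U \<rightarrow>\<^sub>E A i \<union> A j" using U by auto
  moreover have "inj_on (restrict g U) U" using gi U by (auto simp: inj_on_def)
  ultimately show "restrict g U \<in> alternating_injs L U (A i) (A j)"
    unfolding alternating_injs_def by auto
qed

lemma trace_outside_fiberI:
  assumes U: "U \<subseteq> {0..<N}" and r: "r \<in> ({0..<N} - U) \<rightarrow>\<^sub>E V"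
    and adm: "admissible_outside k A V (A i \<union> A j) N L U r"
    and f: "f \<in> alternating_injs L U (A i) (A j)"
  defines "g \<equiv> \<lambda>h. if h \<in> U then f h else r h"
  shows "g \<in> path_forest_embs N L V (cmp_edges k A)" and "trace_outside (A i \<union> A j) N g = (U, r)"
proof -
  have fE: "f \<in> U \<rightarrow>\<^sub>E A i \<union> A j" and fi: "inj_on f U"
    and fl: "\<And>h. h \<in> L \<Longrightarrow> h \<in> U \<Longrightarrow> Suc h \<in> U \<Longrightarrow> f h \<in> A i \<longleftrightarrow> f (Suc h) \<in> A j"
    using f unfolding alternating_injs_def by auto
  have ri: "inj_on r ({0..<N} - U)" and rV: "\<And>h. h \<in> {0..<N} - U \<Longrightarrow> r h \<in> V - (A i \<union> A j)"
    and rl: "\<And>h. h \<in> L \<Longrightarrow> h \<notin> U \<Longrightarrow> Suc h \<notin> U \<Longrightarrow> in_distinct_parts k A (r h) (r (Suc h))"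
    using adm unfolding admissible_outside_def by (auto simp: image_subset_iff)
  have W: "A i \<union> A j \<subseteq> V" using is_partition_into_subset[OF part] ij by blast
  have gE: "g \<in> {0..<N} \<rightarrow>\<^sub>E V"
    using fE r rV U W unfolding g_def by (auto simp: PiE_iff extensional_def)
  have gW: "g h \<in> A i \<union> A j \<longleftrightarrow> h \<in> U" if "h \<in> {0..<N}" for h
    using fE rV[of h] that unfolding g_def by (auto simp: PiE_iff)
  have gV: "g h \<in> V" if "h \<in> {0..<N}" for h
    using gE that by auto
  have gi: "inj_on g {0..<N}"
  proof (rule inj_onI)
    fix a b assume ab: "a \<in> {0..<N}" "b \<in> {0..<N}" "g a = g b"
    then have "a \<in> U \<longleftrightarrow> b \<in> U" using gW by metis
    with ab fi ri show "a = b" unfolding g_def by (auto simp: inj_on_def split: if_splits)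
  qed
  have "in_distinct_parts k A (g h) (g (Suc h))" if h: "h \<in> L" for h
  proof -
    have hN: "h \<in> {0..<N}" "Suc h \<in> {0..<N}" using L h by auto
    consider "h \<in> U" "Suc h \<in> U" | "h \<in> U" "Suc h \<notin> U" | "h \<notin> U" "Suc h \<in> U"
      | "h \<notin> U" "Suc h \<notin> U" by blast
    then show ?thesis
    proof cases
      case 1
      then have "g h \<in> A i \<union> A j" "g (Suc h) \<in> A i \<union> A j" using gW hN by auto
      moreover have "g h \<in> A i \<longleftrightarrow> g (Suc h) \<in> A j" using fl[OF h 1] 1 unfolding g_def by simp
      ultimately show ?thesis using in_distinct_parts_within_two[OF part ij] by blast
    next
      case 2
      with gW gV hN show ?thesis using in_distinct_parts_leaving_two(1)[OF part ij(1,2)] by blast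
    next
      case 3
      with gW gV hN show ?thesis using in_distinct_parts_leaving_two(2)[OF part ij(1,2)] by blast
    next
      case 4
      with rl[OF h] show ?thesis unfolding g_def by simp
    qed
  qed
  with gE gi show "g \<in> path_forest_embs N L V (cmp_edges k A)"
    unfolding path_forest_embs_cmp_edges by blast
  have "{h \<in> {0..<N}. g h \<in> A i \<union> A j} = U"
    using gW U by blast
  moreover have "restrict g ({0..<N} - U) = r"
    using r unfolding g_def by (auto simp: PiE_iff extensional_def fun_eq_iff)
  ultimately show "trace_outside (A i \<union> A j) N g = (U, r)"
    unfolding trace_outside_def Let_def by simp
qed

lemma card_trace_outside_fiber:
  assumes U: "U \<subseteq> {0..<N}" and r: "r \<in> ({0..<N} - U) \<rightarrow>\<^sub>E V"
  shows "card {g \<in> path_forest_embs N L V (cmp_edges k A). trace_outside (A i \<union> A j) N g = (U, r)} =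
    (if admissible_outside k A V (A i \<union> A j) N L U r then card (alternating_injs L U (A i) (A j)) else 0)"
proof (cases "admissible_outside k A V (A i \<union> A j) N L U r")
  case False
  then have "{g \<in> path_forest_embs N L V (cmp_edges k A). trace_outside (A i \<union> A j) N g = (U, r)} = {}"
    using trace_outside_fiberD(1) by blast
  then show ?thesis using False by (simp only: if_False card.empty)
next
  case True
  let ?F = "{g \<in> path_forest_embs N L V (cmp_edges k A). trace_outside (A i \<union> A j) N g = (U, r)}"
  have "bij_betw (\<lambda>g. restrict g U) ?F (alternating_injs L U (A i) (A j))"
  proof (rule bij_betw_byWitness[where f' = "\<lambda>f h. if h \<in> U then f h else r h"])
    show "\<forall>g\<in>?F. (\<lambda>h. if h \<in> U then restrict g U h else r h) = g"
    proof
      fix g assume "g \<in> ?F"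
      then have "g \<in> {0..<N} \<rightarrow>\<^sub>E V" "r = restrict g ({0..<N} - U)"
        by (auto simp: path_forest_embs_def trace_outside_def Let_def)
      with U show "(\<lambda>h. if h \<in> U then restrict g U h else r h) = g"
        by (auto simp: PiE_iff extensional_def fun_eq_iff)
    qed
    show "\<forall>f\<in>alternating_injs L U (A i) (A j). restrict (\<lambda>h. if h \<in> U then f h else r h) U = f"
      by (auto simp: alternating_injs_def PiE_iff extensional_def fun_eq_iff)
    show "(\<lambda>g. restrict g U) ` ?F \<subseteq> alternating_injs L U (A i) (A j)"
      using trace_outside_fiberD(2) by blast
    show "(\<lambda>f h. if h \<in> U then f h else r h) ` alternating_injs L U (A i) (A j) \<subseteq> ?F"
      using trace_outside_fiberI[OF U r True] by blast
  qed
  with True show ?thesis by (simp add: bij_betw_same_card)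
qed

lemma card_path_forest_embs_by_trace:
  assumes fin: "finite V"
  shows "card (path_forest_embs N L V (cmp_edges k A)) =
    (\<Sum>(U, r)\<in>Sigma (Pow {0..<N}) (\<lambda>U. ({0..<N} - U) \<rightarrow>\<^sub>E V).
       if admissible_outside k A V (A i \<union> A j) N L U r then card (alternating_injs L U (A i) (A j)) else 0)"
proof -
  let ?K = "Sigma (Pow {0..<N}) (\<lambda>U. ({0..<N} - U) \<rightarrow>\<^sub>E V)"
  let ?E = "path_forest_embs N L V (cmp_edges k A)"
  have "trace_outside (A i \<union> A j) N g \<in> ?K" if "g \<in> ?E" for g
  proof -
    have "g h \<in> V" if "h < N" for h using \<open>g \<in> ?E\<close> that by (auto simp: path_forest_embs_def)
    then show ?thesis unfolding trace_outside_def Let_def by (auto simp: restrict_PiE_iff)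
  qed
  then have "trace_outside (A i \<union> A j) N ` ?E \<subseteq> ?K" by blast
  then have "card ?E = (\<Sum>y\<in>?K. card {g \<in> ?E. trace_outside (A i \<union> A j) N g = y})"
    using fin by (intro card_eq_sum_card_fibers) (auto intro: finite_path_forest_embs finite_PiE)
  also have "\<dots> = (\<Sum>(U, r)\<in>?K. if admissible_outside k A V (A i \<union> A j) N L U r
                                 then card (alternating_injs L U (A i) (A j)) else 0)"
    by (rule sum.cong) (auto simp: card_trace_outside_fiber)
  finally show ?thesis .
qed

end

section \<open>Moving vertices towards the Turan graph\<close>

lemma is_partition_into_move:
  assumes part: "is_partition_into k A V" and ij: "i < k" "j < k" "i \<noteq> j" and v: "v \<in> A i"
  shows "is_partition_into k (A(i := A i - {v}, j := insert v (A j))) V"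
proof -
  let ?A' = "A(i := A i - {v}, j := insert v (A j))"
  have disj: "A l \<inter> A l' = {}" if "l < k" "l' < k" "l \<noteq> l'" for l l'
    using part that unfolding is_partition_into_def by blast
  have "(\<Union>l<k. ?A' l) = (\<Union>l<k. A l)"
  proof (intro equalityI subsetI)
    fix x assume "x \<in> (\<Union>l<k. ?A' l)"
    then show "x \<in> (\<Union>l<k. A l)" using ij v by (auto split: if_splits)
  next
    fix x assume "x \<in> (\<Union>l<k. A l)"
    then obtain l where "l < k" "x \<in> A l" by blast
    then show "x \<in> (\<Union>l<k. ?A' l)"
      using ij by (cases "x = v \<or> l = i \<or> l = j") (auto intro!: UN_I[of j] UN_I[of i] UN_I[of l])
  qed
  moreover have "?A' l \<inter> ?A' l' = {}" if "l < k" "l' < k" "l \<noteq> l'" for l l'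
    using disj[OF that] disj[of l i] disj[of l' i] disj[of l j] disj[of l' j] that ij v by auto
  ultimately show ?thesis using part unfolding is_partition_into_def by simp
qed

lemma admissible_outside_cong:
  assumes L: "L \<subseteq> {h. Suc h < N}" and same: "\<And>x l. x \<notin> W \<Longrightarrow> x \<in> A' l \<longleftrightarrow> x \<in> A l"
  shows "admissible_outside k A' V W N L U r = admissible_outside k A V W N L U r"
proof -
  have "r h \<notin> W" "r (Suc h) \<notin> W"
    if "r ` ({0..<N} - U) \<subseteq> V - W" "h \<in> L" "h \<notin> U" "Suc h \<notin> U" for h
  proof -
    have "h \<in> {0..<N} - U" "Suc h \<in> {0..<N} - U" using that L by auto
    then show "r h \<notin> W" "r (Suc h) \<notin> W" using that(1) by blast+
  qed
  moreover have "in_distinct_parts k A' x y = in_distinct_parts k A x y" if "x \<notin> W" "y \<notin> W" for x y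
    using that same unfolding in_distinct_parts_def by simp
  ultimately show ?thesis unfolding admissible_outside_def by blast
qed

lemma card_path_forest_embs_le_move:
  assumes part: "is_partition_into k A V" and fin: "finite V"
    and ij: "i < k" "j < k" "i \<noteq> j" and L: "L \<subseteq> {h. Suc h < N}"
    and v: "v \<in> A i" and le: "card (A j) + 1 \<le> card (A i)"
  shows "card (path_forest_embs N L V (cmp_edges k A)) \<le>
    card (path_forest_embs N L V (cmp_edges k (A(i := A i - {v}, j := insert v (A j)))))"
proof -
  define A' where "A' = A(i := A i - {v}, j := insert v (A j))"
  have part': "is_partition_into k A' V"
    unfolding A'_def by (rule is_partition_into_move[OF part ij v])
  have A'ij: "A' i = A i - {v}" "A' j = insert v (A j)" unfolding A'_def using ij by auto
  have W: "A' i \<union> A' j = A i \<union> A j" using A'ij v by auto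
  have adm_eq: "admissible_outside k A' V (A i \<union> A j) N L U r = admissible_outside k A V (A i \<union> A j) N L U r"
    for U r
    by (rule admissible_outside_cong[OF L]) (use v in \<open>auto simp: A'_def\<close>)
  have XY: "A i \<inter> A j = {}" "finite (A i)" "finite (A j)"
    using part ij fin is_partition_into_subset[OF part] unfolding is_partition_into_def
    by (auto intro: finite_subset)
  have term_le:
    "(if admissible_outside k A V (A i \<union> A j) N L U r then card (alternating_injs L U (A i) (A j)) else 0)
      \<le> (if admissible_outside k A' V (A' i \<union> A' j) N L U r then card (alternating_injs L U (A' i) (A' j)) else 0)"
    if "U \<subseteq> {0..<N}" for U r
  proof -
    have "finite U" using that by (rule finite_subset) simp
    then have "card (alternating_injs L U (A i) (A j)) \<le> card (alternating_injs L U (A' i) (A' j))"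
      unfolding A'ij by (rule card_alternating_injs_le_balanced[OF _ XY(2,3,1) v le])
    then show ?thesis unfolding W adm_eq by simp
  qed
  have "card (path_forest_embs N L V (cmp_edges k A)) =
    (\<Sum>(U, r)\<in>Sigma (Pow {0..<N}) (\<lambda>U. ({0..<N} - U) \<rightarrow>\<^sub>E V).
       if admissible_outside k A V (A i \<union> A j) N L U r then card (alternating_injs L U (A i) (A j)) else 0)"
    by (rule card_path_forest_embs_by_trace[OF part ij L fin])
  also have "\<dots> \<le> (\<Sum>(U, r)\<in>Sigma (Pow {0..<N}) (\<lambda>U. ({0..<N} - U) \<rightarrow>\<^sub>E V).
       if admissible_outside k A' V (A' i \<union> A' j) N L U r then card (alternating_injs L U (A' i) (A' j)) else 0)"
    by (rule sum_mono) (auto intro!: term_le)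
  also have "\<dots> = card (path_forest_embs N L V (cmp_edges k A'))"
    by (rule card_path_forest_embs_by_trace[OF part' ij L fin, symmetric])
  finally show ?thesis unfolding A'_def .
qed

lemma is_partition_into_turan_parts: "1 \<le> k \<Longrightarrow> is_partition_into k (turan_parts n k) {0..<n}"
  unfolding is_partition_into_def turan_parts_def by auto

lemma Suc_diff_mod_eq_0_iff:
  assumes "i < k"
  shows "Suc (n + k - 1 - i) mod k = 0 \<longleftrightarrow> n mod k = i"
proof -
  have "n mod k < k" using assms by simp
  then have bounds: "n mod k + (k - i) < 2 * k" "0 < n mod k + (k - i)" using assms by linarith+
  have "Suc (n + k - 1 - i) = n + (k - i)" using assms by auto
  then have "Suc (n + k - 1 - i) mod k = (n mod k + (k - i)) mod k" by (simp add: mod_add_left_eq)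
  with bounds assms show ?thesis
    by (cases "n mod k + (k - i) < k") (auto simp: le_mod_geq)
qed

lemma card_turan_parts: "i < k \<Longrightarrow> card (turan_parts n k i) = (n + k - 1 - i) div k"
proof (induction n)
  case 0
  then show ?case by (simp add: turan_parts_def)
next
  case (Suc n)
  have step: "turan_parts (Suc n) k i =
      (if n mod k = i then insert n (turan_parts n k i) else turan_parts n k i)"
    unfolding turan_parts_def by (auto simp: less_Suc_eq)
  have "finite (turan_parts n k i)" "n \<notin> turan_parts n k i" unfolding turan_parts_def by auto
  moreover have "Suc n + k - 1 - i = Suc (n + k - 1 - i)" using Suc.prems by auto
  ultimately show ?case
    using Suc.IH[OF Suc.prems] Suc_diff_mod_eq_0_iff[OF Suc.prems, of n]
    unfolding step by (auto simp: div_Suc)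
qed

lemma card_turan_parts_le_Suc:
  assumes "i < k" "j < k"
  shows "card (turan_parts n k j) \<le> card (turan_parts n k i) + 1"
proof -
  have "(n + k - 1 - j) div k \<le> ((n + k - 1 - i) + k) div k" using assms by (intro div_le_mono) linarith
  also have "\<dots> = (n + k - 1 - i) div k + 1" using assms by (subst div_add_self2) auto
  finally show ?thesis using card_turan_parts assms by simp
qed

lemma card_path_forest_embs_le_of_inj:
  assumes partA: "is_partition_into k A V" and partB: "is_partition_into k B W"
    and finW: "finite W" and L: "L \<subseteq> {h. Suc h < N}"
    and inj: "inj_on \<beta> V" and into: "\<And>i. i < k \<Longrightarrow> \<beta> ` A i \<subseteq> B i"
  shows "card (path_forest_embs N L V (cmp_edges k A)) \<le> card (path_forest_embs N L W (cmp_edges k B))"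
proof (rule card_inj_on_le[OF _ _ finite_path_forest_embs[OF finW]])
  let ?m = "\<lambda>g. restrict (\<beta> \<circ> g) {0..<N}"
  have \<beta>W: "\<beta> x \<in> W" if "x \<in> V" for x
    using is_partition_into_cover[OF partA that] into is_partition_into_subset[OF partB] by blast
  show "inj_on ?m (path_forest_embs N L V (cmp_edges k A))"
  proof (rule inj_onI, rule ext)
    fix g1 g2 h assume g: "g1 \<in> path_forest_embs N L V (cmp_edges k A)"
      "g2 \<in> path_forest_embs N L V (cmp_edges k A)" "?m g1 = ?m g2"
    show "g1 h = g2 h"
    proof (cases "h < N")
      case True
      then have "\<beta> (g1 h) = \<beta> (g2 h)" using fun_cong[OF g(3), of h] by simp
      moreover have "g1 h \<in> V" "g2 h \<in> V" using g True unfolding path_forest_embs_def by auto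
      ultimately show ?thesis using inj by (auto simp: inj_on_def)
    qed (use g in \<open>auto simp: path_forest_embs_def PiE_iff extensional_def\<close>)
  qed
  show "?m ` path_forest_embs N L V (cmp_edges k A) \<subseteq> path_forest_embs N L W (cmp_edges k B)"
  proof (rule image_subsetI)
    fix g assume "g \<in> path_forest_embs N L V (cmp_edges k A)"
    then have gV: "\<forall>h\<in>{0..<N}. g h \<in> V" and gi: "inj_on g {0..<N}"
      and gs: "\<forall>h\<in>L. in_distinct_parts k A (g h) (g (Suc h))"
      unfolding path_forest_embs_cmp_edges by auto
    have "in_distinct_parts k B (\<beta> (g h)) (\<beta> (g (Suc h)))" if "h \<in> L" for h
      using gs that into unfolding in_distinct_parts_def by blast
    then have "\<forall>h\<in>L. in_distinct_parts k B (?m g h) (?m g (Suc h))" using L by auto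
    moreover have "?m g \<in> {0..<N} \<rightarrow>\<^sub>E W" using gV \<beta>W by (auto simp: restrict_PiE_iff)
    moreover have "inj_on (?m g) {0..<N}" using gi gV inj by (auto simp: inj_on_def)
    ultimately show "?m g \<in> path_forest_embs N L W (cmp_edges k B)"
      unfolding path_forest_embs_cmp_edges by blast
  qed
qed

lemma exists_inj_into_larger_parts:
  assumes partA: "is_partition_into k A V" and partB: "is_partition_into k B W"
    and finA: "\<And>i. i < k \<Longrightarrow> finite (A i)" and finB: "\<And>i. i < k \<Longrightarrow> finite (B i)"
    and le: "\<And>i. i < k \<Longrightarrow> card (A i) \<le> card (B i)"
  obtains \<beta> where "inj_on \<beta> V" "\<And>i. i < k \<Longrightarrow> \<beta> ` A i \<subseteq> B i"
proof -
  have "\<exists>f. f ` A i \<subseteq> B i \<and> inj_on f (A i)" if "i < k" for i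
    using card_le_inj[OF finA[OF that] finB[OF that] le[OF that]] by blast
  then obtain F where F: "\<And>i. i < k \<Longrightarrow> F i ` A i \<subseteq> B i \<and> inj_on (F i) (A i)" by metis
  define \<beta> where "\<beta> x = F (SOME i. i < k \<and> x \<in> A i) x" for x
  have \<beta>: "\<beta> x = F i x" if "i < k" "x \<in> A i" for i x
  proof -
    have "(SOME i. i < k \<and> x \<in> A i) = i"
      using that is_partition_into_unique[OF partA] by (intro some_equality) auto
    then show ?thesis unfolding \<beta>_def by simp
  qed
  have into: "\<beta> ` A i \<subseteq> B i" if "i < k" for i using F[OF that] \<beta>[OF that] by auto
  have "inj_on \<beta> V"
  proof (rule inj_onI)
    fix x y assume xy: "x \<in> V" "y \<in> V" "\<beta> x = \<beta> y"
    obtain i j where ij: "i < k" "x \<in> A i" "j < k" "y \<in> A j"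
      using is_partition_into_cover[OF partA] xy(1,2) by metis
    then have "i = j" using into xy(3) is_partition_into_unique[OF partB] by blast
    with F[OF ij(1)] \<beta> ij xy(3) show "x = y" by (auto simp: inj_on_def)
  qed
  with into that show thesis by blast
qed

lemma sum_excess_move_less:
  fixes t :: "nat \<Rightarrow> nat"
  assumes ij: "i < k" "j < k" "i \<noteq> j" and v: "v \<in> A i" "v \<notin> A j"
    and fin: "finite (A i)" "finite (A j)" and excess: "t i < card (A i)" and deficit: "card (A j) < t j"
  shows "(\<Sum>l<k. card ((A(i := A i - {v}, j := insert v (A j))) l) - t l) < (\<Sum>l<k. card (A l) - t l)"
proof (rule sum_strict_mono_ex1)
  let ?A' = "A(i := A i - {v}, j := insert v (A j))"
  have i: "card (?A' i) = card (A i) - 1" using ij v fin by simp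
  have j: "card (?A' j) - t j = 0" using ij v fin deficit by simp
  show "\<forall>l\<in>{..<k}. card (?A' l) - t l \<le> card (A l) - t l"
    using i j by auto
  show "\<exists>l\<in>{..<k}. card (?A' l) - t l < card (A l) - t l"
    using i ij excess by (intro bexI[of _ i]) auto
qed simp

lemma card_path_forest_embs_le_turan:
  assumes k: "1 \<le> k" and fin: "finite V" and card: "card V = n" and L: "L \<subseteq> {h. Suc h < N}"
    and part: "is_partition_into k A V"
  shows "card (path_forest_embs N L V (cmp_edges k A)) \<le> card (path_forest_embs N L {0..<n} (turan_edges n k))"
  using part
proof (induction "\<Sum>i<k. card (A i) - card (turan_parts n k i)" arbitrary: A rule: less_induct)
  case less
  let ?t = "\<lambda>i. card (turan_parts n k i)"
  have tpart: "is_partition_into k (turan_parts n k) {0..<n}"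
    by (rule is_partition_into_turan_parts[OF k])
  have finA: "finite (A i)" if "i < k" for i
    using is_partition_into_subset[OF less.prems that] fin by (rule finite_subset)
  show ?case
  proof (cases "\<forall>i<k. card (A i) \<le> ?t i")
    case True
    obtain \<beta> where "inj_on \<beta> V" "\<And>i. i < k \<Longrightarrow> \<beta> ` A i \<subseteq> turan_parts n k i"
      using exists_inj_into_larger_parts[OF less.prems tpart finA] True
      by (auto simp: turan_parts_def)
    then show ?thesis unfolding turan_edges_def
      by (intro card_path_forest_embs_le_of_inj[OF less.prems tpart _ L]) auto
  next
    case False
    then obtain i where i: "i < k" "?t i < card (A i)" by (auto simp: not_le)
    have "(\<Sum>l<k. ?t l) < (\<Sum>l<k. card (A l))" if "\<forall>l<k. ?t l \<le> card (A l)"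
      using i that by (intro sum_strict_mono_ex1) auto
    moreover have "(\<Sum>l<k. ?t l) = (\<Sum>l<k. card (A l))"
      using sum_card_is_partition_into[OF tpart] sum_card_is_partition_into[OF less.prems fin] card
      by simp
    ultimately obtain j where j: "j < k" "card (A j) < ?t j" using not_le by fastforce
    have "i \<noteq> j" using i j by auto
    have le: "card (A j) + 1 \<le> card (A i)"
      using card_turan_parts_le_Suc[OF i(1) j(1), of n] i j by linarith
    obtain v where v: "v \<in> A i" using i by fastforce
    have "v \<notin> A j" using v is_partition_into_unique[OF less.prems] i j \<open>i \<noteq> j\<close> by blast
    let ?A' = "A(i := A i - {v}, j := insert v (A j))"
    have "card (path_forest_embs N L V (cmp_edges k A)) \<le> card (path_forest_embs N L V (cmp_edges k ?A'))"
      by (rule card_path_forest_embs_le_move[OF less.prems fin i(1) j(1) \<open>i \<noteq> j\<close> L v le])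
    also have "\<dots> \<le> card (path_forest_embs N L {0..<n} (turan_edges n k))"
    proof (rule less.hyps)
      show "(\<Sum>l<k. card (?A' l) - ?t l) < (\<Sum>l<k. card (A l) - ?t l)"
        using sum_excess_move_less[OF i(1) j(1) \<open>i \<noteq> j\<close> v \<open>v \<notin> A j\<close> finA[OF i(1)] finA[OF j(1)] i(2) j(2)] .
      show "is_partition_into k ?A' V"
        by (rule is_partition_into_move[OF less.prems i(1) j(1) \<open>i \<noteq> j\<close> v])
    qed
    finally show ?thesis .
  qed
qed

section \<open>Copies and embeddings of linear forests\<close>

definition link_edges :: "nat set \<Rightarrow> nat set set" where
  "link_edges L = {{h, Suc h} | h. h \<in> L}"

lemma link_edges_subset: "L \<subseteq> {h. Suc h < N} \<Longrightarrow> e \<in> link_edges L \<Longrightarrow> e \<subseteq> {0..<N}"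
  unfolding link_edges_def by auto

lemma image_restrict_eq: "e \<subseteq> S \<Longrightarrow> restrict h S ` e = h ` e"
  by auto

lemma graph_iso_trans: "graph_iso V1 E1 V2 E2 \<Longrightarrow> graph_iso V2 E2 V3 E3 \<Longrightarrow> graph_iso V1 E1 V3 E3"
proof -
  assume "graph_iso V1 E1 V2 E2" "graph_iso V2 E2 V3 E3"
  then obtain f g where f: "bij_betw f V1 V2" "(\<lambda>e. f ` e) ` E1 = E2"
    and g: "bij_betw g V2 V3" "(\<lambda>e. g ` e) ` E2 = E3"
    unfolding graph_iso_def by blast
  have "bij_betw (g \<circ> f) V1 V3" using f(1) g(1) by (rule bij_betw_trans)
  moreover have "(\<lambda>e. (g \<circ> f) ` e) ` E1 = E3" using f(2) g(2) by (auto simp: image_comp[symmetric] image_image)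
  ultimately show ?thesis unfolding graph_iso_def by blast
qed

lemma graph_iso_sym: "graph_iso V1 E1 V2 E2 \<Longrightarrow> \<forall>e\<in>E1. e \<subseteq> V1 \<Longrightarrow> graph_iso V2 E2 V1 E1"
proof -
  assume "graph_iso V1 E1 V2 E2" and sub: "\<forall>e\<in>E1. e \<subseteq> V1"
  then obtain f where f: "bij_betw f V1 V2" "(\<lambda>e. f ` e) ` E1 = E2" unfolding graph_iso_def by blast
  have "inv_into V1 f ` f ` e = e" if "e \<in> E1" for e
    using f(1) sub that by (intro inv_into_image_cancel) (auto simp: bij_betw_def)
  then have "(\<lambda>e. inv_into V1 f ` e) ` E2 = E1" unfolding f(2)[symmetric] by (simp add: image_image)
  with bij_betw_inv_into[OF f(1)] show ?thesis unfolding graph_iso_def by blast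
qed

lemma num_copies_graph_iso:
  assumes "graph_iso VH EH VC EC" "\<forall>e\<in>EH. e \<subseteq> VH"
  shows "num_copies VH EH VG EG = num_copies VC EC VG EG"
proof -
  have "graph_iso V' E' VH EH \<longleftrightarrow> graph_iso V' E' VC EC" for V' and E' :: "'c set set"
    using graph_iso_trans[OF _ assms(1)] graph_iso_trans[OF _ graph_iso_sym[OF assms]] by blast
  then show ?thesis unfolding num_copies_def by simp
qed

definition path_forest_isos :: "nat \<Rightarrow> nat set \<Rightarrow> 'a set \<Rightarrow> 'a set set \<Rightarrow> (nat \<Rightarrow> 'a) set" where
  "path_forest_isos N L V E =
     {g \<in> {0..<N} \<rightarrow>\<^sub>E V. bij_betw g {0..<N} V \<and> (\<lambda>e. g ` e) ` link_edges L = E}"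

lemma finite_path_forest_isos: "finite (path_forest_isos N L V E)"
proof (cases "finite V")
  case True
  have "path_forest_isos N L V E \<subseteq> {0..<N} \<rightarrow>\<^sub>E V" unfolding path_forest_isos_def by auto
  moreover have "finite ({0..<N} \<rightarrow>\<^sub>E V)" using True by (intro finite_PiE) auto
  ultimately show ?thesis by (rule finite_subset)
next
  case False
  then have "path_forest_isos N L V E = {}"
    by (auto simp: path_forest_isos_def dest: bij_betw_finite)
  then show ?thesis by simp
qed

lemma card_path_forest_isos_le:
  assumes L: "L \<subseteq> {h. Suc h < N}" and iso: "graph_iso V1 E1 V2 E2"
  shows "card (path_forest_isos N L V1 E1) \<le> card (path_forest_isos N L V2 E2)"
proof -
  obtain f where f: "bij_betw f V1 V2" "(\<lambda>e. f ` e) ` E1 = E2" using iso unfolding graph_iso_def by blast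
  let ?m = "\<lambda>g. restrict (f \<circ> g) {0..<N}"
  have "?m g \<in> path_forest_isos N L V2 E2" if g: "g \<in> path_forest_isos N L V1 E1" for g
  proof -
    have gb: "bij_betw g {0..<N} V1" and ge: "(\<lambda>e. g ` e) ` link_edges L = E1"
      using g unfolding path_forest_isos_def by auto
    have "bij_betw (?m g) {0..<N} V2"
      using bij_betw_trans[OF gb f(1)] by (rule bij_betw_cong[THEN iffD1, rotated]) auto
    moreover have "(\<lambda>e. ?m g ` e) ` link_edges L = E2"
    proof -
      have "(\<lambda>e. ?m g ` e) ` link_edges L = (\<lambda>e. f ` g ` e) ` link_edges L"
      proof (rule image_cong[OF refl])
        fix e assume "e \<in> link_edges L"
        then show "?m g ` e = f ` g ` e"
          by (simp only: image_restrict_eq[OF link_edges_subset[OF L]] image_comp)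
      qed
      also have "\<dots> = (\<lambda>e. f ` e) ` ((\<lambda>e. g ` e) ` link_edges L)" by (simp add: image_image)
      finally show ?thesis using ge f(2) by simp
    qed
    ultimately show ?thesis unfolding path_forest_isos_def by (auto simp: bij_betw_def)
  qed
  moreover have "inj_on ?m (path_forest_isos N L V1 E1)"
  proof (rule inj_onI, rule ext)
    fix g1 g2 h assume g: "g1 \<in> path_forest_isos N L V1 E1" "g2 \<in> path_forest_isos N L V1 E1" "?m g1 = ?m g2"
    show "g1 h = g2 h"
    proof (cases "h < N")
      case True
      then have "f (g1 h) = f (g2 h)" using fun_cong[OF g(3), of h] by simp
      moreover have "g1 h \<in> V1" "g2 h \<in> V1" using g True unfolding path_forest_isos_def by auto
      ultimately show ?thesis using f(1) by (auto simp: bij_betw_def inj_on_def)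
    qed (use g in \<open>auto simp: path_forest_isos_def PiE_iff extensional_def\<close>)
  qed
  ultimately show ?thesis
    by (intro card_inj_on_le[OF _ _ finite_path_forest_isos]) auto
qed

lemma card_path_forest_isos_graph_iso:
  assumes L: "L \<subseteq> {h. Suc h < N}" and iso: "graph_iso V E {0..<N} (link_edges L)"
    and sub: "\<forall>e\<in>E. e \<subseteq> V"
  shows "card (path_forest_isos N L V E) = card (path_forest_isos N L {0..<N} (link_edges L))"
  using card_path_forest_isos_le[OF L iso] card_path_forest_isos_le[OF L graph_iso_sym[OF iso sub]]
  by simp

lemma card_path_forest_isos_pos:
  assumes L: "L \<subseteq> {h. Suc h < N}"
  shows "0 < card (path_forest_isos N L {0..<N} (link_edges L))"
proof -
  have "(\<lambda>e. restrict id {0..<N} ` e) ` link_edges L = (\<lambda>e. e) ` link_edges L"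
    using link_edges_subset[OF L] by (intro image_cong) (simp_all only: image_restrict_eq image_id id_def image_ident)
  then have "restrict id {0..<N} \<in> path_forest_isos N L {0..<N} (link_edges L)"
    unfolding path_forest_isos_def by (auto simp: bij_betw_def inj_on_def)
  then show ?thesis using finite_path_forest_isos by (auto simp: card_gt_0_iff)
qed

lemma path_forest_embs_fiber_copy:
  assumes "V' \<subseteq> VG" "E' \<subseteq> EG"
  shows "{g \<in> path_forest_embs N L VG EG. (g ` {0..<N}, (\<lambda>e. g ` e) ` link_edges L) = (V', E')}
    = path_forest_isos N L V' E'" (is "?F = _")
proof (rule equalityI)
  show "?F \<subseteq> path_forest_isos N L V' E'"
    unfolding path_forest_embs_def path_forest_isos_def by (auto simp: bij_betw_def PiE_iff)
  show "path_forest_isos N L V' E' \<subseteq> ?F"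
  proof
    fix g assume "g \<in> path_forest_isos N L V' E'"
    then have gE: "g \<in> {0..<N} \<rightarrow>\<^sub>E V'" and gb: "bij_betw g {0..<N} V'"
      and E': "(\<lambda>e. g ` e) ` link_edges L = E'"
      unfolding path_forest_isos_def by auto
    have "{g h, g (Suc h)} \<in> EG" if "h \<in> L" for h
    proof -
      have "g ` {h, Suc h} \<in> E'" using that E' unfolding link_edges_def by blast
      then show ?thesis using assms(2) by auto
    qed
    with gE gb E' assms(1) show "g \<in> ?F"
      unfolding path_forest_embs_def by (auto simp: bij_betw_def PiE_iff)
  qed
qed

lemma num_copies_mult_card_path_forest_isos:
  assumes L: "L \<subseteq> {h. Suc h < N}" and fin: "finite VG"
  shows "num_copies {0..<N} (link_edges L) VG EG * card (path_forest_isos N L {0..<N} (link_edges L))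
    = card (path_forest_embs N L VG EG)"
proof -
  let ?C = "{(V', E'). V' \<subseteq> VG \<and> E' \<subseteq> EG \<and> (\<forall>e\<in>E'. e \<subseteq> V') \<and> graph_iso V' E' {0..<N} (link_edges L)}"
  let ?copy = "\<lambda>g. (g ` {0..<N}, (\<lambda>e. g ` e) ` link_edges L)"
  have "finite ?C" by (rule finite_subset[of _ "Pow VG \<times> Pow (Pow VG)"]) (use fin in auto)
  moreover have "?copy ` path_forest_embs N L VG EG \<subseteq> ?C"
  proof (rule image_subsetI)
    fix g assume g: "g \<in> path_forest_embs N L VG EG"
    then have "bij_betw g {0..<N} (g ` {0..<N})" by (simp add: path_forest_embs_def inj_on_imp_bij_betw)
    then have "graph_iso {0..<N} (link_edges L) (g ` {0..<N}) ((\<lambda>e. g ` e) ` link_edges L)"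
      unfolding graph_iso_def by blast
    then have "graph_iso (g ` {0..<N}) ((\<lambda>e. g ` e) ` link_edges L) {0..<N} (link_edges L)"
      using link_edges_subset[OF L] by (blast intro: graph_iso_sym)
    moreover have "(\<lambda>e. g ` e) ` link_edges L \<subseteq> EG" "g ` {0..<N} \<subseteq> VG"
      using g unfolding path_forest_embs_def link_edges_def by auto
    moreover have "\<forall>e\<in>(\<lambda>e. g ` e) ` link_edges L. e \<subseteq> g ` {0..<N}"
      using link_edges_subset[OF L] by blast
    ultimately show "?copy g \<in> ?C" by simp
  qed
  ultimately have "card (path_forest_embs N L VG EG) =
      (\<Sum>c\<in>?C. card {g \<in> path_forest_embs N L VG EG. ?copy g = c})"
    by (rule card_eq_sum_card_fibers[OF finite_path_forest_embs[OF fin]])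
  also have "\<dots> = (\<Sum>c\<in>?C. card (path_forest_isos N L {0..<N} (link_edges L)))"
  proof (rule sum.cong[OF refl])
    fix c assume "c \<in> ?C"
    then obtain V' E' where c: "c = (V', E')" and "V' \<subseteq> VG" "E' \<subseteq> EG" "\<forall>e\<in>E'. e \<subseteq> V'"
      "graph_iso V' E' {0..<N} (link_edges L)" by blast
    then show "card {g \<in> path_forest_embs N L VG EG. ?copy g = c}
        = card (path_forest_isos N L {0..<N} (link_edges L))"
      by (simp only: path_forest_embs_fiber_copy card_path_forest_isos_graph_iso[OF L])
  qed
  finally show ?thesis by (simp add: num_copies_def)
qed

lemma path_edges_eq_link_edges: "path_edges m = link_edges {i. Suc i < m}"
  unfolding path_edges_def link_edges_def by auto

lemma link_edges_Un: "link_edges (L1 \<union> L2) = link_edges L1 \<union> link_edges L2"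
  unfolding link_edges_def by blast

lemma link_edges_eq_image: "link_edges L = (\<lambda>h. {h, Suc h}) ` L"
  unfolding link_edges_def by blast

lemma image_link_edges_shift: "(\<lambda>e. (+) c ` e) ` link_edges L = link_edges ((+) c ` L)"
  by (simp add: link_edges_eq_image image_image)

lemma graph_iso_link_edges_Un:
  assumes disj: "V1 \<inter> V2 = {}" and sub1: "\<forall>e\<in>E1. e \<subseteq> V1" and sub2: "\<forall>e\<in>E2. e \<subseteq> V2"
    and iso1: "graph_iso V1 E1 {0..<N1} (link_edges L1)" and iso2: "graph_iso V2 E2 {0..<N2} (link_edges L2)"
  shows "graph_iso (V1 \<union> V2) (E1 \<union> E2) {0..<N1 + N2} (link_edges (L1 \<union> (+) N1 ` L2))"
proof -
  obtain f1 where f1: "bij_betw f1 V1 {0..<N1}" "(\<lambda>e. f1 ` e) ` E1 = link_edges L1"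
    using iso1 unfolding graph_iso_def by blast
  obtain f2 where f2: "bij_betw f2 V2 {0..<N2}" "(\<lambda>e. f2 ` e) ` E2 = link_edges L2"
    using iso2 unfolding graph_iso_def by blast
  define g where "g x = (if x \<in> V1 then f1 x else N1 + f2 x)" for x
  have "bij_betw ((+) N1) {0..<N2} {N1..<N1 + N2}"
    by (rule bij_betwI[where g = "\<lambda>x. x - N1"]) auto
  with f2(1) have "bij_betw ((+) N1 \<circ> f2) V2 {N1..<N1 + N2}" by (rule bij_betw_trans)
  then have "bij_betw g V2 {N1..<N1 + N2}"
    by (rule bij_betw_cong[THEN iffD2, rotated]) (use disj in \<open>auto simp: g_def\<close>)
  moreover have "bij_betw g V1 {0..<N1}"
    using f1(1) by (rule bij_betw_cong[THEN iffD1, rotated]) (auto simp: g_def)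
  ultimately have "bij_betw g (V1 \<union> V2) ({0..<N1} \<union> {N1..<N1 + N2})"
    using disj by (intro bij_betw_combine) auto
  moreover have "{0..<N1} \<union> {N1..<N1 + N2} = {0..<N1 + N2}" by auto
  moreover have "(\<lambda>e. g ` e) ` E1 = link_edges L1"
    unfolding f1(2)[symmetric] using sub1 by (intro image_cong) (auto simp: g_def)
  moreover have "(\<lambda>e. g ` e) ` E2 = link_edges ((+) N1 ` L2)"
  proof -
    have "(\<lambda>e. g ` e) ` E2 = (\<lambda>e. (+) N1 ` e) ` ((\<lambda>e. f2 ` e) ` E2)"
      unfolding image_image using sub2 disj by (intro image_cong) (auto simp: g_def image_image)
    then show ?thesis unfolding f2(2) image_link_edges_shift .
  qed
  ultimately show ?thesis unfolding graph_iso_def link_edges_Un image_Un by (intro exI[of _ g]) simp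
qed

lemma path_components_graph_iso_link_edges:
  assumes "finite P" "\<forall>B\<in>P. \<forall>B'\<in>P. B \<noteq> B' \<longrightarrow> B \<inter> B' = {}" "\<forall>e\<in>E. \<exists>B\<in>P. e \<subseteq> B"
    "\<forall>B\<in>P. is_path B {e\<in>E. e \<subseteq> B}"
  shows "\<exists>N L. L \<subseteq> {h. Suc h < N} \<and> graph_iso (\<Union>P) E {0..<N} (link_edges L)"
  using assms
proof (induction P arbitrary: E rule: finite_induct)
  case empty
  then have "E = {}" by auto
  then have "graph_iso (\<Union>{}) E {0..<0} (link_edges {})"
    unfolding graph_iso_def link_edges_def by (auto simp: bij_betw_def)
  then show ?case by blast
next
  case (insert B P)
  define E' where "E' = {e \<in> E. \<exists>B'\<in>P. e \<subseteq> B'}"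
  have "\<exists>N L. L \<subseteq> {h. Suc h < N} \<and> graph_iso (\<Union>P) E' {0..<N} (link_edges L)"
  proof (rule insert.IH)
    have "{e \<in> E'. e \<subseteq> B'} = {e \<in> E. e \<subseteq> B'}" if "B' \<in> P" for B'
      unfolding E'_def using that by blast
    then show "\<forall>B\<in>P. is_path B {e \<in> E'. e \<subseteq> B}" using insert.prems(3) by simp
  qed (use insert.prems in \<open>auto simp: E'_def\<close>)
  then obtain N L where L: "L \<subseteq> {h. Suc h < N}" and iso: "graph_iso (\<Union>P) E' {0..<N} (link_edges L)"
    by blast
  obtain m where isoB: "graph_iso B {e\<in>E. e \<subseteq> B} {0..<m} (link_edges {i. Suc i < m})"
    using insert.prems(3) unfolding is_path_def path_edges_eq_link_edges by blast
  have "\<Union>P \<inter> B = {}" using insert.prems(1) insert.hyps(2) by auto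
  from graph_iso_link_edges_Un[OF this _ _ iso isoB]
  have "graph_iso (\<Union>P \<union> B) (E' \<union> {e\<in>E. e \<subseteq> B}) {0..<N + m} (link_edges (L \<union> (+) N ` {i. Suc i < m}))"
    unfolding E'_def by blast
  moreover have "\<Union>P \<union> B = \<Union>(insert B P)" "E' \<union> {e\<in>E. e \<subseteq> B} = E"
    using insert.prems(2) unfolding E'_def by auto
  moreover have "L \<union> (+) N ` {i. Suc i < m} \<subseteq> {h. Suc h < N + m}" using L by auto
  ultimately show ?case by (intro exI[of _ "N + m"] exI[of _ "L \<union> (+) N ` {i. Suc i < m}"]) simp
qed

lemma linear_forest_graph_iso_link_edges:
  assumes "linear_forest VH EH"
  obtains N L where "L \<subseteq> {h. Suc h < N}" "graph_iso VH EH {0..<N} (link_edges L)"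
proof -
  obtain P where P: "\<Union>P = VH" "\<forall>B\<in>P. \<forall>B'\<in>P. B \<noteq> B' \<longrightarrow> B \<inter> B' = {}"
    "\<forall>e\<in>EH. \<exists>B\<in>P. e \<subseteq> B" "\<forall>B\<in>P. is_path B {e\<in>EH. e \<subseteq> B}"
    using assms unfolding linear_forest_def by blast
  have "finite VH" using assms unfolding linear_forest_def wf_graph_def by simp
  then have "finite P" using P(1) by (metis finite_UnionD)
  from path_components_graph_iso_link_edges[OF this P(2-4)] that show thesis unfolding P(1) by blast
qed

theorem theorem3:
  fixes VH :: "'b set" and EH :: "'b set set"
    and V :: "'a set" and A :: "nat \<Rightarrow> 'a set" and k n :: nat
  assumes "linear_forest VH EH"
    and "k \<ge> 1" and "n \<ge> 1"
    and "finite V" and "card V = n"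
    and "is_partition_into k A V"
  shows "num_copies VH EH V (cmp_edges k A) \<le> num_copies VH EH {0..<n} (turan_edges n k)"
proof -
  obtain N L where L: "L \<subseteq> {h. Suc h < N}" and iso: "graph_iso VH EH {0..<N} (link_edges L)"
    using linear_forest_graph_iso_link_edges[OF assms(1)] .
  have sub: "\<forall>e\<in>EH. e \<subseteq> VH" using assms(1) unfolding linear_forest_def wf_graph_def by blast
  let ?aut = "card (path_forest_isos N L {0..<N} (link_edges L))"
  have "num_copies VH EH V (cmp_edges k A) * ?aut = card (path_forest_embs N L V (cmp_edges k A))"
    using num_copies_mult_card_path_forest_isos[OF L assms(4), of "cmp_edges k A"]
      num_copies_graph_iso[OF iso sub, of V "cmp_edges k A"] by simp
  also have "\<dots> \<le> card (path_forest_embs N L {0..<n} (turan_edges n k))"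
    by (rule card_path_forest_embs_le_turan[OF assms(2,4,5) L assms(6)])
  also have "\<dots> = num_copies VH EH {0..<n} (turan_edges n k) * ?aut"
    using num_copies_mult_card_path_forest_isos[OF L, of "{0..<n}" "turan_edges n k"]
      num_copies_graph_iso[OF iso sub, of "{0..<n}" "turan_edges n k"] by simp
  finally show ?thesis using card_path_forest_isos_pos[OF L] by simp
qed

end
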